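(* Let $\mathcal{M}=\langle \mathcal{S},\mathcal{A},\mathcal{P},\mathcal{R},\gamma\rangle$ be a deterministic finite MDP with next-state function $\mathscr{N}$, and let $d_{\sim}$ be the unique function $\mathcal{S}\times\mathcal{S}\to\mathbb{R}$ satisfying $d_{\sim}(s,t)=\max_{a\in\mathcal{A}}\left(|\mathcal{R}(s,a)-\mathcal{R}(t,a)|+\gamma\,d_{\sim}(\mathscr{N}(s,a),\mathscr{N}(t,a))\right)$ for all $s,t$. Let $\mathcal{D}$ be a probability distribution on the set $\mathcal{T}=\mathcal{S}\times\mathcal{S}\times\mathcal{A}$ of transition pairs $\tau_{s,t,a}$ (the pair of transitions $\langle s,a,\mathcal{R}(s,a),\mathscr{N}(s,a)\rangle$, $\langle t,a,\mathcal{R}(t,a),\mathscr{N}(t,a)\rangle$) with $\mathcal{D}(\tau)>0$ for all $\tau\in\mathcal{T}$, and let $\tau_{s_1,t_1,a_1},\tau_{s_2,t_2,a_2},\dots$ be independent samples from $\mathcal{D}$. Let $d_0\equiv 0$ and for $n\ge1$ define $d_n(s,t)=d_{n-1}(s,t)$ for all $(s,t)\neq(s_n,t_n)$ and $$d_n(s_n,t_n)=\max\left(d_{n-1}(s_n,t_n),\ |\mathcal{R}(s_n,a_n)-\mathcal{R}(t_n,a_n)|+\gamma\,d_{n-1}(\mathscr{N}(s_n,a_n),\mathscr{N}(t_n,a_n))\right).$$ Then $\lim_{n\to\infty}d_n=d_{\sim}$ almost surely.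
   Context: A finite MDP has finite state set $\mathcal{S}$, finite action set $\mathcal{A}$, transition kernel $\mathcal{P}$, reward $\mathcal{R}:\mathcal{S}\times\mathcal{A}\to\mathbb{R}$ bounded by $R_{max}$, and discount $\gamma\in[0,1)$. It is deterministic if for every $s,a$ there is a unique $\mathscr{N}(s,a)\in\mathcal{S}$ with $\mathcal{P}(s,a)(\mathscr{N}(s,a))=1$. In this deterministic setting $d_\sim$ coincides with the bisimulation metric of Ferns et al., the unique fixed point of $d\mapsto\max_a(|\mathcal{R}(s,a)-\mathcal{R}(t,a)|+\gamma\mathcal{W}_1(d)(\mathcal{P}(s,a),\mathcal{P}(t,a)))$. *)

theory Defs
  imports "HOL-Probability.Probability"
begin

text \<open>The argument x is the sample
  sequence (0-indexed: x n is the (n+1)-th sample tau_{s,t,a}); d_0 = 0.\<close>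
fun sampled_bisim :: "('s \<Rightarrow> 'a \<Rightarrow> real) \<Rightarrow> ('s \<Rightarrow> 'a \<Rightarrow> 's) \<Rightarrow> real \<Rightarrow>
    (nat \<Rightarrow> 's \<times> 's \<times> 'a) \<Rightarrow> nat \<Rightarrow> 's \<Rightarrow> 's \<Rightarrow> real" where
  "sampled_bisim R N g x 0 = (\<lambda>s t. 0)"
| "sampled_bisim R N g x (Suc n) =
     (let d = sampled_bisim R N g x n;
          (sn, tn, an) = x n
      in (\<lambda>s t. if (s, t) = (sn, tn)
                then max (d sn tn) (\<bar>R sn an - R tn an\<bar> + g * d (N sn an) (N tn an))
                else d s t))"

end

theory Submission
  imports Defs
begin

text \<open>The iterates \<open>d\<^sub>n\<close> increase pointwise, and every nonnegative supersolution of the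
  update, in particular \<open>d\<^sub>\<sim>\<close>, bounds them; so they converge to some \<open>L \<le> d\<^sub>\<sim>\<close>.
  Almost surely every transition pair is sampled infinitely often (the probability \<open>q\<close> that an
  event of probability \<open>p > 0\<close> never occurs satisfies \<open>q = q (1 - p)\<close> by conditioning on the
  first sample), and then \<open>L\<close> is itself a supersolution.  Finally, if \<open>d\<^sub>\<sim> - L\<close> takes its
  maximum \<open>M\<close> at \<open>(s, t)\<close> and \<open>a\<close> attains the maximum in the fixed-point equation at
  \<open>(s, t)\<close>, then \<open>M \<le> \<gamma> M\<close>, so \<open>M \<le> 0\<close>.\<close>

lemma le_if_difference_contracts:
  fixes u v :: "'p::finite \<Rightarrow> real"
  assumes "0 \<le> g" and "g < 1" and contracts: "\<And>p. \<exists>q. u p - v p \<le> g * (u q - v q)"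
  shows "u p \<le> v p"
proof -
  define M where "M = Max (range (\<lambda>p. u p - v p))"
  have le_M: "u p - v p \<le> M" for p
    unfolding M_def by (rule Max_ge) auto
  have "M \<in> range (\<lambda>p. u p - v p)"
    unfolding M_def by (rule Max_in) auto
  then obtain p0 where "M = u p0 - v p0" by blast
  moreover obtain q where "u p0 - v p0 \<le> g * (u q - v q)"
    using contracts by blast
  moreover have "g * (u q - v q) \<le> g * M"
    using le_M assms(1) by (rule mult_left_mono)
  ultimately have "(1 - g) * M \<le> 0" by (simp add: algebra_simps)
  then have "M \<le> 0" using assms(2) by (simp add: mult_le_0_iff)
  then show ?thesis using le_M[of p] by linarith
qed

lemma (in prob_space) AE_stream_space_visits:
  assumes [measurable]: "A \<in> events" and "prob A > 0"
  shows "AE \<omega> in stream_space M. \<exists>k. \<omega> !! k \<in> A"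
proof -
  interpret S: prob_space "stream_space M"
    by (rule prob_space_stream_space)
  define q where "q = \<P>(\<omega> in stream_space M. \<forall>k. \<omega> !! k \<notin> A)"
  have avoid_Stream: "(\<forall>k. (t ## \<omega>) !! k \<notin> A) \<longleftrightarrow> t \<notin> A \<and> (\<forall>k. \<omega> !! k \<notin> A)" for t \<omega>
    by (auto simp: Stream_snth split: nat.splits)
  have "ennreal q = (\<integral>\<^sup>+t. \<P>(\<omega> in stream_space M. \<forall>k. (t ## \<omega>) !! k \<notin> A) \<partial>M)"
    unfolding q_def by (rule prob_stream_space) measurable
  also have "\<dots> = (\<integral>\<^sup>+t. ennreal q * indicator (space M - A) t \<partial>M)"
    by (rule nn_integral_cong) (auto simp: avoid_Stream q_def split: split_indicator)
  also have "\<dots> = ennreal q * emeasure M (space M - A)"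
    by (rule nn_integral_cmult_indicator) measurable
  also have "\<dots> = ennreal (q * (1 - prob A))"
    using prob_compl[OF assms(1)] by (simp add: emeasure_eq_measure ennreal_mult' q_def)
  finally have "q = q * (1 - prob A)"
    using prob_le_1 by (subst (asm) ennreal_inj) (simp_all add: q_def)
  then have "q * prob A = 0"
    by (simp add: algebra_simps)
  then have "q = 0"
    using assms(2) by simp
  then show ?thesis
    unfolding q_def by (subst AE_iff_measurable[OF _ refl]) (simp_all add: S.emeasure_eq_measure)
qed

lemma (in prob_space) AE_stream_space_visits_infinitely_often:
  assumes [measurable]: "A \<in> events" and "prob A > 0"
  shows "AE \<omega> in stream_space M. \<exists>\<^sub>\<infinity>k. \<omega> !! k \<in> A"
proof -
  have "AE \<omega> in stream_space M. \<exists>k. \<omega> !! (n + k) \<in> A" for n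
  proof (induction n)
    case 0
    show ?case using AE_stream_space_visits[OF assms] by simp
  next
    case (Suc n)
    then show ?case by (subst AE_stream_space) simp_all
  qed
  then have "AE \<omega> in stream_space M. \<forall>n. \<exists>k. \<omega> !! (n + k) \<in> A"
    by (simp add: AE_all_countable)
  then show ?thesis
    by eventually_elim (metis INFM_nat_le le_add1 le_Suc_ex)
qed

definition bisim_backup ::
    "('s \<Rightarrow> 'a \<Rightarrow> real) \<Rightarrow> ('s \<Rightarrow> 'a \<Rightarrow> 's) \<Rightarrow> real \<Rightarrow> ('s \<Rightarrow> 's \<Rightarrow> real) \<Rightarrow> 's \<Rightarrow> 's \<Rightarrow> 'a \<Rightarrow> real" where
  "bisim_backup R N g d s t a = \<bar>R s a - R t a\<bar> + g * d (N s a) (N t a)"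

lemma bisim_backup_mono:
  assumes "0 \<le> g" and "\<And>s t. d s t \<le> d' s t"
  shows "bisim_backup R N g d s t a \<le> bisim_backup R N g d' s t a"
  using assms by (simp add: bisim_backup_def mult_left_mono)

definition is_bisim_fixpoint ::
    "('s \<Rightarrow> 'a::finite \<Rightarrow> real) \<Rightarrow> ('s \<Rightarrow> 'a \<Rightarrow> 's) \<Rightarrow> real \<Rightarrow> ('s \<Rightarrow> 's \<Rightarrow> real) \<Rightarrow> bool" where
  "is_bisim_fixpoint R N g d \<longleftrightarrow> (\<forall>s t. d s t = Max (range (bisim_backup R N g d s t)))"

lemma bisim_fixpoint_supersolution:
  assumes "is_bisim_fixpoint R N g d"
  shows "bisim_backup R N g d s t a \<le> d s t"
proof -
  have "bisim_backup R N g d s t a \<le> Max (range (bisim_backup R N g d s t))"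
    by (rule Max_ge) auto
  also have "\<dots> = d s t"
    using assms unfolding is_bisim_fixpoint_def by metis
  finally show ?thesis .
qed

lemma bisim_fixpoint_attained:
  assumes "is_bisim_fixpoint R N g d"
  obtains a where "d s t = bisim_backup R N g d s t a"
proof -
  have "Max (range (bisim_backup R N g d s t)) \<in> range (bisim_backup R N g d s t)"
    by (rule Max_in) auto
  then show ?thesis
    using assms that unfolding is_bisim_fixpoint_def by force
qed

lemma bisim_fixpoint_nonneg:
  fixes R :: "'s::finite \<Rightarrow> 'a::finite \<Rightarrow> real"
  assumes "0 \<le> g" and "g < 1" and "is_bisim_fixpoint R N g d"
  shows "0 \<le> d s t"
proof -
  have "0 - d s t \<le> g * (0 - d (N s a) (N t a))" for s t a
    using bisim_fixpoint_supersolution[OF assms(3), of s t a] by (simp add: bisim_backup_def)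
  then show ?thesis
    using le_if_difference_contracts[OF assms(1,2), of "\<lambda>_. 0" "\<lambda>q. d (fst q) (snd q)" "(s, t)"]
    by fastforce
qed

lemma bisim_fixpoint_le_supersolution:
  fixes R :: "'s::finite \<Rightarrow> 'a::finite \<Rightarrow> real"
  assumes "0 \<le> g" and "g < 1" and "is_bisim_fixpoint R N g d"
    and super: "\<And>s t a. bisim_backup R N g L s t a \<le> L s t"
  shows "d s t \<le> L s t"
proof -
  have "\<exists>q. d s t - L s t \<le> g * (d (fst q) (snd q) - L (fst q) (snd q))" for s t
  proof -
    obtain a where "d s t = bisim_backup R N g d s t a"
      using bisim_fixpoint_attained[OF assms(3)] .
    with super[of s t a] have "d s t - L s t \<le> g * (d (N s a) (N t a) - L (N s a) (N t a))"
      by (simp add: bisim_backup_def algebra_simps)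
    then show ?thesis by (intro exI[of _ "(N s a, N t a)"]) simp
  qed
  then show ?thesis
    using le_if_difference_contracts[OF assms(1,2), of "\<lambda>q. d (fst q) (snd q)" "\<lambda>q. L (fst q) (snd q)" "(s, t)"]
    by fastforce
qed

lemma sampled_bisim_Suc:
  assumes "x n = (sn, tn, an)"
  shows "sampled_bisim R N g x (Suc n) s t =
     (if (s, t) = (sn, tn)
      then max (sampled_bisim R N g x n sn tn) (bisim_backup R N g (sampled_bisim R N g x n) sn tn an)
      else sampled_bisim R N g x n s t)"
  using assms by (simp add: Let_def bisim_backup_def)

lemma incseq_sampled_bisim: "incseq (\<lambda>n. sampled_bisim R N g x n s t)"
proof (rule incseq_SucI)
  fix n
  obtain sn tn an where x: "x n = (sn, tn, an)" by (metis prod_cases3)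
  show "sampled_bisim R N g x n s t \<le> sampled_bisim R N g x (Suc n) s t"
    unfolding sampled_bisim_Suc[where x=x and n=n, OF x] by simp
qed

lemma sampled_bisim_le_supersolution:
  assumes "0 \<le> g" and "\<And>s t. 0 \<le> F s t"
    and "\<And>s t a. bisim_backup R N g F s t a \<le> F s t"
  shows "sampled_bisim R N g x n s t \<le> F s t"
proof (induction n arbitrary: s t)
  case 0
  show ?case using assms(2) by simp
next
  case (Suc n)
  obtain sn tn an where x: "x n = (sn, tn, an)" by (metis prod_cases3)
  have "bisim_backup R N g (sampled_bisim R N g x n) sn tn an \<le> bisim_backup R N g F sn tn an"
    using assms(1) Suc.IH by (rule bisim_backup_mono)
  also have "\<dots> \<le> F sn tn" by (rule assms(3))
  finally show ?case using Suc.IH unfolding sampled_bisim_Suc[where x=x and n=n, OF x] by simp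
qed

lemma sampled_bisim_limit_supersolution:
  assumes "0 \<le> g" and recurrent: "\<exists>\<^sub>\<infinity>k. x k = (s, t, a)"
    and lim: "\<And>s t. (\<lambda>n. sampled_bisim R N g x n s t) \<longlonglongrightarrow> L s t"
  shows "bisim_backup R N g L s t a \<le> L s t"
proof (rule LIMSEQ_le_const2)
  show "(\<lambda>n. bisim_backup R N g (sampled_bisim R N g x n) s t a) \<longlonglongrightarrow> bisim_backup R N g L s t a"
    unfolding bisim_backup_def by (intro tendsto_intros lim)
  show "\<exists>n0. \<forall>n\<ge>n0. bisim_backup R N g (sampled_bisim R N g x n) s t a \<le> L s t"
  proof (intro exI allI impI)
    fix n
    obtain k where "n \<le> k" and x: "x k = (s, t, a)"
      using recurrent by (auto simp: INFM_nat_le)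
    have "bisim_backup R N g (sampled_bisim R N g x n) s t a
        \<le> bisim_backup R N g (sampled_bisim R N g x k) s t a"
      by (rule bisim_backup_mono[OF assms(1)], rule incseqD[OF incseq_sampled_bisim \<open>n \<le> k\<close>])
    also have "\<dots> \<le> sampled_bisim R N g x (Suc k) s t"
      unfolding sampled_bisim_Suc[where x=x and n=k, OF x] by simp
    also have "\<dots> \<le> L s t"
      by (rule incseq_le[OF incseq_sampled_bisim lim])
    finally show "bisim_backup R N g (sampled_bisim R N g x n) s t a \<le> L s t" .
  qed
qed

lemma sampled_bisim_tendsto_fixpoint:
  fixes R :: "'s::finite \<Rightarrow> 'a::finite \<Rightarrow> real"
  assumes "0 \<le> g" and "g < 1" and fixpoint: "is_bisim_fixpoint R N g d"
    and recurrent: "\<And>\<tau>. \<exists>\<^sub>\<infinity>k. x k = \<tau>"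
  shows "(\<lambda>n. sampled_bisim R N g x n s t) \<longlonglongrightarrow> d s t"
proof -
  define L where "L s t = (SUP n. sampled_bisim R N g x n s t)" for s t
  have bounded: "sampled_bisim R N g x n s t \<le> d s t" for n s t
    using assms(1) bisim_fixpoint_nonneg[OF assms(1-3)] bisim_fixpoint_supersolution[OF fixpoint]
    by (rule sampled_bisim_le_supersolution)
  have lim: "(\<lambda>n. sampled_bisim R N g x n s t) \<longlonglongrightarrow> L s t" for s t
    unfolding L_def by (rule LIMSEQ_incseq_SUP[OF bdd_aboveI2[OF bounded] incseq_sampled_bisim])
  have "L s t \<le> d s t"
    by (rule LIMSEQ_le_const2[OF lim]) (simp add: bounded)
  moreover have "d s t \<le> L s t"
    using assms(1-3) sampled_bisim_limit_supersolution[OF assms(1) recurrent lim]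
    by (rule bisim_fixpoint_le_supersolution)
  ultimately show ?thesis
    using lim by (metis order_antisym)
qed

theorem theorem4:
  fixes R :: "'s::finite \<Rightarrow> 'a::finite \<Rightarrow> real"
    and N :: "'s \<Rightarrow> 'a \<Rightarrow> 's"
    and g :: real
    and dsim :: "'s \<Rightarrow> 's \<Rightarrow> real"
    and D :: "('s \<times> 's \<times> 'a) pmf"
  assumes "0 \<le> g" and "g < 1"
    and "\<forall>s t. dsim s t = Max (range (\<lambda>a. \<bar>R s a - R t a\<bar> + g * dsim (N s a) (N t a)))"
    and "\<forall>\<tau>. pmf D \<tau> > 0"
  shows "AE \<omega> in stream_space (measure_pmf D).
           \<forall>s t. (\<lambda>n. sampled_bisim R N g (snth \<omega>) n s t) \<longlonglongrightarrow> dsim s t"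
proof -
  have fixpoint: "is_bisim_fixpoint R N g dsim"
    unfolding is_bisim_fixpoint_def bisim_backup_def by (rule assms(3))
  have "AE \<omega> in stream_space (measure_pmf D). \<exists>\<^sub>\<infinity>k. \<omega> !! k = \<tau>" for \<tau>
    using measure_pmf.AE_stream_space_visits_infinitely_often[of "{\<tau>}" D] assms(4)
    by (simp add: measure_pmf_single)
  then have "AE \<omega> in stream_space (measure_pmf D). \<forall>\<tau>. \<exists>\<^sub>\<infinity>k. \<omega> !! k = \<tau>"
    by (simp add: AE_all_countable)
  then show ?thesis
    by eventually_elim (blast intro: sampled_bisim_tendsto_fixpoint[OF assms(1,2) fixpoint])
qed

end
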